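(* Let $n>2k$, $k\ge t+3$, and let $\mathcal F\subseteq\binom{[n]}{k}$ be a maximal $t$-intersecting family with $\tau_t(\mathcal F)=t+2$ and $\tau_t(\mathcal T_t(\mathcal F))=t$. If $|\mathcal T_t(\mathcal F)|=(k-t)(k-t+1)+1$, then: (i) $\mathcal F$ is a Type I family; (ii) $|\mathcal F|>((k-t)(k-t+1)+1)\binom{n-t-2}{k-t-2}-(k-t)(2(k-t)^2+1)\binom{n-t-3}{k-t-3}$.
   Context: A family is $t$-intersecting if any two members meet in at least $t$ elements. A $t$-cover of a family $\mathcal G$ (of subsets of $[n]$) is a set $S\subseteq[n]$ with $|S\cap G|\ge t$ for all $G\in\mathcal G$; $\tau_t(\mathcal G)$ is the minimum size of a $t$-cover, and $\mathcal T_t(\mathcal G)$ is the set of all $t$-covers of $\mathcal G$ of size $\tau_t(\mathcal G)$. A $t$-intersecting $\mathcal F\subseteq\binom{[n]}{k}$ is maximal if no $t$-intersecting subfamily of $\binom{[n]}{k}$ properly contains it. Type I family: choose $T,A\in\binom{[n]}{t}$ and $B,C\in\binom{[n]}{k-t}$ with $|T\cap A|=t-1$, $T\cap(B\cup C)=\emptyset$, and $A,B,C$ pairwise disjoint; choose $u\in C$; put $G_1=A\cup B$, $G_2=A\cup C$, $G_3=(T\cap A)\cup B\cup\{u\}$. The family is $\{F\in\binom{[n]}{k}: F\cap(A\cup T)=T,\ F\cap B\ne\emptyset,\ F\cap C\neq\emptyset\}\cup\{F\in\binom{[n]}{k}: A\cup T\subseteq F,\ F\cap(B\cup\{u\})\neq\emptyset\}\cup\{G_1,G_2,G_3\}$.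 *)

theory Defs
  imports Main
begin

definition k_sets :: "nat \<Rightarrow> nat \<Rightarrow> nat set set" where
  "k_sets n k = {A. A \<subseteq> {1..n} \<and> card A = k}"

definition t_intersecting :: "nat \<Rightarrow> nat set set \<Rightarrow> bool" where
  "t_intersecting t F \<longleftrightarrow> (\<forall>A\<in>F. \<forall>B\<in>F. t \<le> card (A \<inter> B))"

definition t_cover :: "nat \<Rightarrow> nat \<Rightarrow> nat set set \<Rightarrow> nat set \<Rightarrow> bool" where
  "t_cover n t G S \<longleftrightarrow> S \<subseteq> {1..n} \<and> (\<forall>X\<in>G. t \<le> card (S \<inter> X))"

definition tau_t :: "nat \<Rightarrow> nat \<Rightarrow> nat set set \<Rightarrow> nat" where
  "tau_t n t G = (LEAST s. \<exists>S. t_cover n t G S \<and> card S = s)"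

definition T_t :: "nat \<Rightarrow> nat \<Rightarrow> nat set set \<Rightarrow> nat set set" where
  "T_t n t G = {S. t_cover n t G S \<and> card S = tau_t n t G}"

definition maximal_t_intersecting :: "nat \<Rightarrow> nat \<Rightarrow> nat \<Rightarrow> nat set set \<Rightarrow> bool" where
  "maximal_t_intersecting n k t F \<longleftrightarrow>
     F \<subseteq> k_sets n k \<and> t_intersecting t F \<and>
     (\<forall>F'. F \<subset> F' \<and> F' \<subseteq> k_sets n k \<longrightarrow> \<not> t_intersecting t F')"

definition type_I :: "nat \<Rightarrow> nat \<Rightarrow> nat \<Rightarrow> nat set set \<Rightarrow> bool" where
  "type_I n k t F \<longleftrightarrow>
    (\<exists>T A B C u. T \<in> k_sets n t \<and> A \<in> k_sets n t \<and>
        B \<in> k_sets n (k - t) \<and> C \<in> k_sets n (k - t) \<and>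
        card (T \<inter> A) = t - 1 \<and> T \<inter> (B \<union> C) = {} \<and>
        A \<inter> B = {} \<and> A \<inter> C = {} \<and> B \<inter> C = {} \<and> u \<in> C \<and>
        F = {X \<in> k_sets n k. X \<inter> (A \<union> T) = T \<and> X \<inter> B \<noteq> {} \<and> X \<inter> C \<noteq> {}}
          \<union> {X \<in> k_sets n k. A \<union> T \<subseteq> X \<and> X \<inter> (B \<union> {u}) \<noteq> {}}
          \<union> {A \<union> B, A \<union> C, (T \<inter> A) \<union> B \<union> {u}})"

end

theory Submission
  imports Defs
begin

(* Let T be the common t-subset of all minimum t-covers of F, which exists because
   tau_t (T_t F) = t, and put m = k - t.  A member of F not containing T meets T in
   exactly t - 1 points: otherwise all traces S - T of minimum covers S would be pairs
   inside one (m+2)-set, and C(m+2, 2) < m(m+1) + 1.  The traces G - T of these members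
   form an intersecting (m+1)-uniform family without a common point, and S |-> S - T maps
   the minimum t-covers bijectively onto its transversal pairs.  Two traces meeting in i
   points admit at most (m+1-i)^2 + i(m+1) transversal pairs, so the value m(m+1) + 1
   forces two traces meeting in a single point a, and then the traces are a+B, a+C, u+B.
   All members missing T miss the same point z of T, and maximality of F adds every
   k-set containing T whose trace meets the three traces: this is the Type I family.
   A Bonferroni estimate of the members containing T gives the lower bound on |F|. *)

section \<open>Counting k-sets\<close>

lemma card_supersets:
  assumes "finite V" "D \<subseteq> V" "card D \<le> r"
  shows "card {Y. Y \<subseteq> V \<and> card Y = r \<and> D \<subseteq> Y} = (card V - card D) choose (r - card D)"
proof -
  have "finite D" using assms finite_subset by blast
  have image: "{Y. Y \<subseteq> V \<and> card Y = r \<and> D \<subseteq> Y} = (\<lambda>Z. Z \<union> D) ` {Z. Z \<subseteq> V - D \<and> card Z = r - card D}"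
  proof (intro equalityI subsetI)
    fix Y assume "Y \<in> {Y. Y \<subseteq> V \<and> card Y = r \<and> D \<subseteq> Y}"
    moreover from this have "card (Y - D) = r - card D"
      using \<open>finite D\<close> by (simp add: card_Diff_subset)
    ultimately show "Y \<in> (\<lambda>Z. Z \<union> D) ` {Z. Z \<subseteq> V - D \<and> card Z = r - card D}"
      by (intro image_eqI[of _ _ "Y - D"]) auto
  next
    fix Y assume "Y \<in> (\<lambda>Z. Z \<union> D) ` {Z. Z \<subseteq> V - D \<and> card Z = r - card D}"
    then obtain Z where Z: "Z \<subseteq> V - D" "card Z = r - card D" "Y = Z \<union> D" by auto
    have "finite Z" using Z(1) assms(1) finite_subset by blast
    then show "Y \<in> {Y. Y \<subseteq> V \<and> card Y = r \<and> D \<subseteq> Y}"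
      using Z assms(2,3) \<open>finite D\<close> card_Un_disjoint[of Z D] by auto
  qed
  have "inj_on (\<lambda>Z. Z \<union> D) {Z. Z \<subseteq> V - D \<and> card Z = r - card D}"
    by (rule inj_onI) auto
  then have "card {Y. Y \<subseteq> V \<and> card Y = r \<and> D \<subseteq> Y} = card (V - D) choose (r - card D)"
    unfolding image by (simp add: card_image n_subsets assms(1))
  then show ?thesis
    using assms(2) \<open>finite D\<close> by (simp add: card_Diff_subset)
qed

lemma card_UN_ge_Bonferroni:
  assumes "finite I" "\<And>i. i \<in> I \<Longrightarrow> finite (A i)"
  shows "(\<Sum>i\<in>I. int (card (A i))) - (\<Sum>i\<in>I. \<Sum>j\<in>I - {i}. int (card (A i \<inter> A j)))
           \<le> int (card (\<Union>i\<in>I. A i))"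
  using assms
proof (induction I rule: finite_induct)
  case empty
  then show ?case by simp
next
  case (insert x I)
  let ?U = "\<Union>i\<in>I. A i"
  have fin: "finite (A x)" "finite ?U" using insert by auto
  have "A x \<inter> ?U = (\<Union>j\<in>I. A x \<inter> A j)" by blast
  then have "card (A x \<inter> ?U) \<le> (\<Sum>j\<in>I. card (A x \<inter> A j))"
    using card_UN_le[OF insert.hyps(1)] by metis
  then have overlap: "int (card (A x \<inter> ?U)) \<le> (\<Sum>j\<in>I. int (card (A x \<inter> A j)))"
    by (metis of_nat_le_iff of_nat_sum)
  have "int (card (A x \<union> ?U)) = int (card (A x)) + int (card ?U) - int (card (A x \<inter> ?U))"
    using card_Un_Int[OF fin] by simp
  moreover have "(\<Sum>i\<in>insert x I. \<Sum>j\<in>insert x I - {i}. int (card (A i \<inter> A j)))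
      = (\<Sum>j\<in>I. int (card (A x \<inter> A j))) + (\<Sum>i\<in>I. int (card (A i \<inter> A x)))
        + (\<Sum>i\<in>I. \<Sum>j\<in>I - {i}. int (card (A i \<inter> A j)))"
  proof -
    have "\<And>i. i \<in> I \<Longrightarrow> insert x I - {i} = insert x (I - {i})" "insert x I - {x} = I"
      using insert.hyps(2) by auto
    then show ?thesis
      using insert.hyps by (simp add: sum.distrib)
  qed
  moreover have "0 \<le> (\<Sum>i\<in>I. int (card (A i \<inter> A x)))" by (simp add: sum_nonneg)
  moreover have "(\<Sum>i\<in>insert x I. int (card (A i))) = int (card (A x)) + (\<Sum>i\<in>I. int (card (A i)))"
    using insert.hyps by simp
  moreover have "(\<Sum>i\<in>I. int (card (A i))) - (\<Sum>i\<in>I. \<Sum>j\<in>I - {i}. int (card (A i \<inter> A j)))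
      \<le> int (card ?U)"
    using insert.IH insert.prems by blast
  ultimately have "(\<Sum>i\<in>insert x I. int (card (A i))) -
     (\<Sum>i\<in>insert x I. \<Sum>j\<in>insert x I - {i}. int (card (A i \<inter> A j)))
     \<le> int (card (A x \<union> ?U))"
    using overlap by linarith
  then show ?case by simp
qed

lemma card_UN_less_sum:
  assumes "finite I" "\<And>i. i \<in> I \<Longrightarrow> finite (A i)" "i \<in> I" "j \<in> I" "i \<noteq> j"
    and "A i \<inter> A j \<noteq> {}"
  shows "card (\<Union>i\<in>I. A i) < (\<Sum>i\<in>I. card (A i))"
proof -
  define R where "R = I - {i, j}"
  have I: "I = insert i (insert j R)" "i \<notin> insert j R" "j \<notin> R" "finite R"
    using assms(1,3,4,5) unfolding R_def by auto
  have "(\<Union>i\<in>I. A i) = (A i \<union> A j) \<union> (\<Union>i\<in>R. A i)"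
    using I(1) by auto
  then have "card (\<Union>i\<in>I. A i) \<le> card (A i \<union> A j) + card (\<Union>i\<in>R. A i)"
    by (simp only: card_Un_le)
  moreover have "card (\<Union>i\<in>R. A i) \<le> (\<Sum>i\<in>R. card (A i))"
    using card_UN_le[OF I(4)] .
  moreover have "card (A i \<union> A j) < card (A i) + card (A j)"
  proof -
    have "finite (A i)" "finite (A j)" using assms(2-4) by auto
    then show ?thesis
      using card_Un_Int[of "A i" "A j"] assms(6) by (simp add: card_gt_0_iff)
  qed
  moreover have "(\<Sum>i\<in>I. card (A i)) = card (A i) + card (A j) + (\<Sum>i\<in>R. card (A i))"
    using I by (simp add: sum.insert)
  ultimately show ?thesis by linarith
qed

lemma card_supersets_meeting_ge:
  assumes "finite V" "D \<subseteq> V" "S \<subseteq> V - D" "card D + 2 \<le> r"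
  shows "int (card S) * int ((card V - card D - 1) choose (r - card D - 1))
       - int (card S) * (int (card S) - 1) * int ((card V - card D - 2) choose (r - card D - 2))
     \<le> int (card {Y. Y \<subseteq> V \<and> card Y = r \<and> D \<subseteq> Y \<and> Y \<inter> S \<noteq> {}})"
proof -
  let ?sup = "\<lambda>D'. {Y. Y \<subseteq> V \<and> card Y = r \<and> D' \<subseteq> Y}"
  let ?c1 = "(card V - card D - 1) choose (r - card D - 1)"
  let ?c2 = "(card V - card D - 2) choose (r - card D - 2)"
  have "finite D" "finite S" using assms(1-3) finite_subset by blast+
  have family: "{Y. Y \<subseteq> V \<and> card Y = r \<and> D \<subseteq> Y \<and> Y \<inter> S \<noteq> {}} = (\<Union>s\<in>S. ?sup (insert s D))"
    by blast
  have single: "card (?sup (insert s D)) = ?c1" if "s \<in> S" for s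
  proof -
    have "card (insert s D) = card D + 1" using that assms(3) \<open>finite D\<close> by auto
    moreover have "insert s D \<subseteq> V" using that assms(2,3) by blast
    ultimately show ?thesis
      using card_supersets[of V "insert s D" r] assms(1,4) by (simp add: diff_diff_add)
  qed
  have pair: "card (?sup (insert s D) \<inter> ?sup (insert s' D)) = ?c2" if "s \<in> S" "s' \<in> S - {s}" for s s'
  proof -
    have "s \<notin> insert s' D" "s' \<notin> D" using that assms(3) by auto
    then have "card (insert s (insert s' D)) = card D + 2" using \<open>finite D\<close> by simp
    moreover have "?sup (insert s D) \<inter> ?sup (insert s' D) = ?sup (insert s (insert s' D))" by blast
    moreover have "insert s (insert s' D) \<subseteq> V" using that assms(2,3) by blast
    ultimately show ?thesis
      using card_supersets[of V "insert s (insert s' D)" r] assms(1,4) by (simp add: diff_diff_add)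
  qed
  have "(\<Sum>s\<in>S. \<Sum>s'\<in>S - {s}. int (card (?sup (insert s D) \<inter> ?sup (insert s' D))))
      = (\<Sum>s\<in>S. (int (card S) - 1) * int ?c2)"
  proof (rule sum.cong[OF refl])
    fix s assume "s \<in> S"
    then have "0 < card S" using \<open>finite S\<close> card_gt_0_iff by blast
    then have "int (card (S - {s})) = int (card S) - 1"
      using \<open>s \<in> S\<close> \<open>finite S\<close> by (simp add: of_nat_diff Suc_le_eq)
    then show "(\<Sum>s'\<in>S - {s}. int (card (?sup (insert s D) \<inter> ?sup (insert s' D)))) = (int (card S) - 1) * int ?c2"
      using pair[OF \<open>s \<in> S\<close>] by simp
  qed
  moreover have "(\<Sum>s\<in>S. int (card (?sup (insert s D)))) = int (card S) * int ?c1"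
    using single by simp
  ultimately show ?thesis
    using card_UN_ge_Bonferroni[of S "\<lambda>s. ?sup (insert s D)"] \<open>finite S\<close> assms(1)
    unfolding family by (simp add: mult.assoc)
qed

lemma card_supersets_pair_meeting_le:
  assumes "finite V" "C \<subseteq> V" "b \<in> V - C" "b' \<in> V - C" "b \<noteq> b'" "3 \<le> r"
  shows "card {Y. Y \<subseteq> V \<and> card Y = r \<and> {b, b'} \<subseteq> Y \<and> Y \<inter> C \<noteq> {}}
           \<le> card C * ((card V - 3) choose (r - 3))"
proof -
  let ?sup = "\<lambda>x. {Y. Y \<subseteq> V \<and> card Y = r \<and> {b, b', x} \<subseteq> Y}"
  have "finite C" using assms(1,2) finite_subset by blast
  have "finite (\<Union>x\<in>C. ?sup x)"
    using assms(1) \<open>finite C\<close> by (auto intro: finite_subset[of _ "Pow V"])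
  then have "card {Y. Y \<subseteq> V \<and> card Y = r \<and> {b, b'} \<subseteq> Y \<and> Y \<inter> C \<noteq> {}} \<le> card (\<Union>x\<in>C. ?sup x)"
    by (rule card_mono) auto
  also have "\<dots> \<le> (\<Sum>x\<in>C. card (?sup x))"
    using card_UN_le[OF \<open>finite C\<close>] .
  also have "\<dots> = (\<Sum>x\<in>C. (card V - 3) choose (r - 3))"
  proof (rule sum.cong[OF refl])
    fix x assume "x \<in> C"
    then have "b \<noteq> x" "b' \<noteq> x" using assms(3,4) by auto
    then have "card {b, b', x} = 3" using assms(5) by (simp add: numeral_3_eq_3)
    moreover have "{b, b', x} \<subseteq> V" using \<open>x \<in> C\<close> assms(2-4) by blast
    ultimately show "card (?sup x) = (card V - 3) choose (r - 3)"
      using card_supersets[OF assms(1), of "{b, b', x}" r] assms(6) by simp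
  qed
  finally show ?thesis by simp
qed

lemma card_meeting_both_ge:
  assumes "finite V" "B \<subseteq> V" "C \<subseteq> V" "B \<inter> C = {}" "card B = m" "card C = m" "3 \<le> m"
  shows "int m ^ 2 * int ((card V - 2) choose (m - 2))
       - 2 * int m ^ 2 * (int m - 1) * int ((card V - 3) choose (m - 3))
     \<le> int (card {Y. Y \<subseteq> V \<and> card Y = m \<and> Y \<inter> B \<noteq> {} \<and> Y \<inter> C \<noteq> {}})"
proof -
  let ?A = "\<lambda>b. {Y. Y \<subseteq> V \<and> card Y = m \<and> {b} \<subseteq> Y \<and> Y \<inter> C \<noteq> {}}"
  let ?c2 = "int ((card V - 2) choose (m - 2))"
  let ?c3 = "int ((card V - 3) choose (m - 3))"
  have "finite B" "finite C" using assms(1-3) finite_subset by blast+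
  have family: "{Y. Y \<subseteq> V \<and> card Y = m \<and> Y \<inter> B \<noteq> {} \<and> Y \<inter> C \<noteq> {}} = (\<Union>b\<in>B. ?A b)"
    by blast
  have single: "int m * ?c2 - int m * (int m - 1) * ?c3 \<le> int (card (?A b))" if "b \<in> B" for b
  proof -
    have "int (card C) * int ((card V - card {b} - 1) choose (m - card {b} - 1))
        - int (card C) * (int (card C) - 1) * int ((card V - card {b} - 2) choose (m - card {b} - 2))
        \<le> int (card (?A b))"
      by (rule card_supersets_meeting_ge) (use that assms in auto)
    then show ?thesis using assms(6) by (simp add: diff_diff_add numeral_2_eq_2 numeral_3_eq_3)
  qed
  have pair: "int (card (?A b \<inter> ?A b')) \<le> int m * ?c3" if "b \<in> B" "b' \<in> B - {b}" for b b'
  proof -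
    have "b \<in> V - C" "b' \<in> V - C" "b \<noteq> b'" using that assms(2,4) by auto
    have eq: "?A b \<inter> ?A b' = {Y. Y \<subseteq> V \<and> card Y = m \<and> {b, b'} \<subseteq> Y \<and> Y \<inter> C \<noteq> {}}"
      by blast
    have "card (?A b \<inter> ?A b') \<le> card C * ((card V - 3) choose (m - 3))"
      unfolding eq using \<open>b \<in> V - C\<close> \<open>b' \<in> V - C\<close> \<open>b \<noteq> b'\<close>
      by (rule card_supersets_pair_meeting_le[OF assms(1,3) _ _ _ assms(7)])
    then show ?thesis using assms(6) by (simp flip: of_nat_mult)
  qed
  have "(\<Sum>b\<in>B. int m * ?c2 - int m * (int m - 1) * ?c3) \<le> (\<Sum>b\<in>B. int (card (?A b)))"
    using single by (rule sum_mono)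
  moreover have "(\<Sum>b\<in>B. \<Sum>b'\<in>B - {b}. int (card (?A b \<inter> ?A b'))) \<le> (\<Sum>b\<in>B. \<Sum>b'\<in>B - {b}. int m * ?c3)"
    using pair by (intro sum_mono)
  moreover have "(\<Sum>b\<in>B. \<Sum>b'\<in>B - {b}. int m * ?c3) = int m * ((int m - 1) * (int m * ?c3))"
  proof -
    have "int (card (B - {b})) = int m - 1" if "b \<in> B" for b
      using that \<open>finite B\<close> assms(5,7) by (simp add: of_nat_diff)
    then show ?thesis using assms(5) by simp
  qed
  ultimately show ?thesis
    using card_UN_ge_Bonferroni[of B ?A] \<open>finite B\<close> assms(1,5)
    unfolding family by (simp add: algebra_simps power2_eq_square)
qed

lemma card_meeting_families_ge:
  assumes "finite V" "B \<subseteq> V" "C \<subseteq> V" "B \<inter> C = {}" "card B = m" "card C = m" "u \<in> C" "3 \<le> m"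
  shows "int (m * (m + 1) + 1) * int ((card V - 1) choose (m - 2))
       - int m * int (2 * m ^ 2 + 1) * int ((card V - 2) choose (m - 3))
     \<le> int (card {Y. Y \<subseteq> V \<and> card Y = m \<and> Y \<inter> B \<noteq> {} \<and> Y \<inter> C \<noteq> {}})
       + int (card {Y. Y \<subseteq> V \<and> card Y = m - 1 \<and> Y \<inter> insert u B \<noteq> {}})"
proof -
  define M where "M = int m"
  define a where "a = int ((card V - 1) choose (m - 2))"
  define b where "b = int ((card V - 2) choose (m - 2))"
  define c where "c = int ((card V - 2) choose (m - 3))"
  define c' where "c' = int ((card V - 3) choose (m - 3))"
  have "finite B" "finite C" using assms(1-3) finite_subset by blast+
  have "u \<notin> B" using assms(4,7) by blast
  then have card_uB: "card (insert u B) = m + 1" using assms(5) \<open>finite B\<close> by simp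
  have "insert u B \<subseteq> V - {}" "card {} + 2 \<le> m - 1" using assms by auto
  from card_supersets_meeting_ge[OF assms(1) empty_subsetI this]
  have second: "(M + 1) * a - (M + 1) * M * c
      \<le> int (card {Y. Y \<subseteq> V \<and> card Y = m - 1 \<and> Y \<inter> insert u B \<noteq> {}})"
    using card_uB unfolding M_def a_def c_def
    by (simp add: diff_diff_add algebra_simps numeral_2_eq_2 numeral_3_eq_3)
  have first: "M ^ 2 * b - 2 * M ^ 2 * (M - 1) * c'
      \<le> int (card {Y. Y \<subseteq> V \<and> card Y = m \<and> Y \<inter> B \<noteq> {} \<and> Y \<inter> C \<noteq> {}})"
    using card_meeting_both_ge[OF assms(1-6,8)] unfolding M_def b_def c'_def .
  have "2 * m \<le> card V"
    using card_mono[OF assms(1), of "B \<union> C"] assms(2-6) \<open>finite B\<close> \<open>finite C\<close>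
    by (simp add: card_Un_disjoint)
  then have "card V - 1 = Suc (card V - 2)" "m - 2 = Suc (m - 3)" using assms(8) by auto
  then have Pascal: "a = b + c" unfolding a_def b_def c_def by simp
  have "c' \<le> c" unfolding c_def c'_def by (simp add: binomial_right_mono)
  then have "M ^ 2 * (M - 1) * c' \<le> M ^ 2 * (M - 1) * c"
    using assms(8) unfolding M_def by (intro mult_left_mono) auto
  then have "(M * (M + 1) + 1) * a - M * (2 * M ^ 2 + 1) * c
      \<le> (M * (M + 1) + 1) * a - M * (2 * M ^ 2 + 1) * c + 2 * (M ^ 2 * (M - 1) * c - M ^ 2 * (M - 1) * c')"
    by simp
  also have "\<dots> = (M ^ 2 * b - 2 * M ^ 2 * (M - 1) * c') + ((M + 1) * a - (M + 1) * M * c)"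
    unfolding Pascal by (simp add: algebra_simps power2_eq_square)
  also have "\<dots> \<le> int (card {Y. Y \<subseteq> V \<and> card Y = m \<and> Y \<inter> B \<noteq> {} \<and> Y \<inter> C \<noteq> {}})
       + int (card {Y. Y \<subseteq> V \<and> card Y = m - 1 \<and> Y \<inter> insert u B \<noteq> {}})"
    using first second by (rule add_mono)
  finally show ?thesis
    unfolding M_def a_def c_def by (simp only: of_nat_add of_nat_mult of_nat_1 of_nat_power of_nat_numeral)
qed

section \<open>Transversal pairs of intersecting uniform families\<close>

definition transversal_pairs :: "'a set \<Rightarrow> 'a set set \<Rightarrow> 'a set set" where
  "transversal_pairs X \<W> = {e. e \<subseteq> X \<and> card e = 2 \<and> (\<forall>W\<in>\<W>. e \<inter> W \<noteq> {})}"

locale intersecting_uniform =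
  fixes X :: "'a set" and \<W> :: "'a set set" and m :: nat
  assumes finite_X: "finite X"
    and member_subset: "W \<in> \<W> \<Longrightarrow> W \<subseteq> X"
    and card_member: "W \<in> \<W> \<Longrightarrow> card W = Suc m"
    and intersecting: "W \<in> \<W> \<Longrightarrow> W' \<in> \<W> \<Longrightarrow> W \<inter> W' \<noteq> {}"
    and no_common_point: "x \<in> X \<Longrightarrow> \<exists>W\<in>\<W>. x \<notin> W"
    and nonempty: "\<W> \<noteq> {}"
begin

abbreviation pairs :: "'a set set" where
  "pairs \<equiv> transversal_pairs X \<W>"

definition star :: "'a \<Rightarrow> 'a set set" where
  "star x = {e \<in> pairs. x \<in> e}"

lemma finite_member: "W \<in> \<W> \<Longrightarrow> finite W"
  using member_subset finite_X finite_subset by blast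

lemma member_eq_if_subset: "W \<in> \<W> \<Longrightarrow> S \<subseteq> W \<Longrightarrow> card S = Suc m \<Longrightarrow> S = W"
  using card_subset_eq finite_member card_member by metis

lemma finite_pairs: "finite pairs"
proof -
  have "pairs \<subseteq> Pow X" unfolding transversal_pairs_def by auto
  then show ?thesis using finite_X finite_subset by blast
qed

lemma finite_star: "finite (star x)"
  using finite_pairs unfolding star_def by simp

lemma pair_meets: "e \<in> pairs \<Longrightarrow> W \<in> \<W> \<Longrightarrow> e \<inter> W \<noteq> {}"
  unfolding transversal_pairs_def by auto

lemma pairsE:
  assumes "e \<in> pairs"
  obtains p q where "e = {p, q}" "p \<noteq> q"
  using assms unfolding transversal_pairs_def by (auto simp: card_2_iff)

lemma star_subset: "W \<in> \<W> \<Longrightarrow> x \<notin> W \<Longrightarrow> star x \<subseteq> (\<lambda>y. {x, y}) ` W"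
proof
  fix e assume W: "W \<in> \<W>" "x \<notin> W" and "e \<in> star x"
  then have "e \<in> pairs" "x \<in> e" unfolding star_def by auto
  moreover obtain y where "y \<in> e" "y \<in> W" using pair_meets[OF \<open>e \<in> pairs\<close> W(1)] by blast
  ultimately have "e = {x, y}" using W(2) by (auto elim: pairsE)
  then show "e \<in> (\<lambda>y. {x, y}) ` W" using \<open>y \<in> W\<close> by blast
qed

lemma card_star_le: "card (star x) \<le> Suc m"
proof (cases "x \<in> X")
  case True
  then obtain W where W: "W \<in> \<W>" "x \<notin> W" using no_common_point by blast
  have "card (star x) \<le> card ((\<lambda>y. {x, y}) ` W)"
    using star_subset[OF W] finite_member[OF W(1)] by (simp add: card_mono)
  also have "\<dots> \<le> card W" using card_image_le finite_member[OF W(1)] by blast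
  finally show ?thesis using card_member[OF W(1)] by simp
next
  case False
  then have "star x = {}" unfolding star_def transversal_pairs_def by auto
  then show ?thesis by simp
qed

lemma star_eq_if_card_eq:
  assumes "card (star x) = Suc m" "W \<in> \<W>" "x \<notin> W"
  shows "star x = (\<lambda>y. {x, y}) ` W"
proof (rule card_subset_eq)
  show "finite ((\<lambda>y. {x, y}) ` W)" using finite_member[OF assms(2)] by simp
  show "star x \<subseteq> (\<lambda>y. {x, y}) ` W" using star_subset[OF assms(2,3)] .
  have "card ((\<lambda>y. {x, y}) ` W) \<le> Suc m"
    using card_image_le[OF finite_member[OF assms(2)]] card_member[OF assms(2)] by metis
  then show "card (star x) = card ((\<lambda>y. {x, y}) ` W)"
    using card_mono[OF \<open>finite ((\<lambda>y. {x, y}) ` W)\<close> \<open>star x \<subseteq> _\<close>] assms(1) by simp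
qed

lemma card_UN_star_le: "finite I \<Longrightarrow> card (\<Union>x\<in>I. star x) \<le> card I * Suc m"
proof -
  assume "finite I"
  then have "card (\<Union>x\<in>I. star x) \<le> (\<Sum>x\<in>I. card (star x))" by (rule card_UN_le)
  also have "\<dots> \<le> (\<Sum>x\<in>I. Suc m)" by (rule sum_mono) (rule card_star_le)
  finally show ?thesis by simp
qed

lemma card_Int_members:
  assumes "W \<in> \<W>" "W' \<in> \<W>" "W \<noteq> W'"
  shows "1 \<le> card (W \<inter> W')" "card (W \<inter> W') \<le> m"
proof -
  have "finite (W \<inter> W')" using finite_member[OF assms(1)] by simp
  then show "1 \<le> card (W \<inter> W')" using intersecting[OF assms(1,2)] by (simp add: Suc_le_eq card_gt_0_iff)
  show "card (W \<inter> W') \<le> m"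
  proof (rule ccontr)
    assume "\<not> card (W \<inter> W') \<le> m"
    then have "W \<inter> W' = W" "W \<inter> W' = W'"
      using member_eq_if_subset[OF assms(1)] member_eq_if_subset[OF assms(2)]
        card_mono[OF finite_member[OF assms(1)], of "W \<inter> W'"] card_member[OF assms(1)] by auto
    then show False using assms(3) by simp
  qed
qed

lemma pairs_subset:
  assumes "W \<in> \<W>" "W' \<in> \<W>"
  shows "pairs \<subseteq> (\<lambda>(p, q). {p, q}) ` ((W - W') \<times> (W' - W)) \<union> (\<Union>x\<in>W \<inter> W'. star x)"
proof
  fix e assume e: "e \<in> pairs"
  then obtain p q where pq: "e = {p, q}" "p \<noteq> q" by (elim pairsE)
  show "e \<in> (\<lambda>(p, q). {p, q}) ` ((W - W') \<times> (W' - W)) \<union> (\<Union>x\<in>W \<inter> W'. star x)"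
  proof (cases "e \<inter> (W \<inter> W') = {}")
    case True
    then have "(p, q) \<in> (W - W') \<times> (W' - W) \<or> (q, p) \<in> (W - W') \<times> (W' - W)"
      using pair_meets[OF e assms(1)] pair_meets[OF e assms(2)] unfolding pq by blast
    then have "e \<in> (\<lambda>(p, q). {p, q}) ` ((W - W') \<times> (W' - W))"
    proof
      assume "(p, q) \<in> (W - W') \<times> (W' - W)"
      then show ?thesis unfolding pq by (rule rev_image_eqI) simp
    next
      assume "(q, p) \<in> (W - W') \<times> (W' - W)"
      then show ?thesis unfolding pq by (rule rev_image_eqI) auto
    qed
    then show ?thesis by blast
  next
    case False
    then show ?thesis using e unfolding star_def by blast
  qed
qed

lemma card_cross_pairs_le:
  "finite A \<Longrightarrow> finite B \<Longrightarrow> card ((\<lambda>(p, q). {p, q}) ` (A \<times> B)) \<le> card A * card B"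
  using card_image_le[of "A \<times> B"] by (simp add: card_cartesian_product)

lemma card_pairs_le:
  assumes "W \<in> \<W>" "W' \<in> \<W>"
  shows "card pairs \<le> (Suc m - card (W \<inter> W')) * (Suc m - card (W \<inter> W')) + card (\<Union>x\<in>W \<inter> W'. star x)"
proof -
  let ?cross = "(\<lambda>(p, q). {p, q}) ` ((W - W') \<times> (W' - W))"
  have "finite (?cross \<union> (\<Union>x\<in>W \<inter> W'. star x))"
    using finite_member[OF assms(1)] finite_member[OF assms(2)] finite_star by simp
  then have "card pairs \<le> card (?cross \<union> (\<Union>x\<in>W \<inter> W'. star x))"
    using pairs_subset[OF assms] by (simp add: card_mono)
  also have "\<dots> \<le> card ?cross + card (\<Union>x\<in>W \<inter> W'. star x)"
    by (rule card_Un_le)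
  finally have "card pairs \<le> card ?cross + card (\<Union>x\<in>W \<inter> W'. star x)" .
  moreover have "card ?cross \<le> card (W - W') * card (W' - W)"
    by (rule card_cross_pairs_le) (use finite_member assms in auto)
  moreover have "card (W - W') = Suc m - card (W \<inter> W')" "card (W' - W) = Suc m - card (W \<inter> W')"
    using card_member assms finite_member by (simp_all add: card_Diff_subset_Int Int_commute)
  ultimately show ?thesis by simp
qed

end

(* m(m+1) + 1 is the largest possible number of transversal pairs of such a family. *)
locale extremal_intersecting_uniform = intersecting_uniform +
  assumes m_ge_3: "3 \<le> m"
    and card_pairs: "card (transversal_pairs X \<W>) = m * (m + 1) + 1"
begin

lemma card_Int_cases:
  assumes "W \<in> \<W>" "W' \<in> \<W>" "W \<noteq> W'"
  shows "card (W \<inter> W') = 1 \<or> card (W \<inter> W') = m"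
proof (rule ccontr)
  let ?i = "card (W \<inter> W')"
  assume "\<not> ?thesis"
  then have "?i = (?i - 2) + 2" "m = (?i - 2) + (Suc m - ?i - 2) + 3"
    using card_Int_members[OF assms] by auto
  then obtain a b where ab: "?i = a + 2" "m = a + b + 3" by blast
  have "card (\<Union>x\<in>W \<inter> W'. star x) \<le> ?i * Suc m"
    using card_UN_star_le finite_member[OF assms(1)] by simp
  then have "card pairs \<le> (Suc m - ?i) * (Suc m - ?i) + ?i * Suc m"
    using card_pairs_le[OF assms(1,2)] by linarith
  also have "\<dots> < m * (m + 1) + 1"
    unfolding ab by (simp add: algebra_simps)
  finally show False using card_pairs by simp
qed

lemma card_UN_star_if_card_Int_eq:
  assumes "W \<in> \<W>" "W' \<in> \<W>" "card (W \<inter> W') = m"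
  shows "m * Suc m \<le> card (\<Union>x\<in>W \<inter> W'. star x)"
proof -
  have "Suc m - m = 1" by simp
  then show ?thesis using card_pairs_le[OF assms(1,2)] card_pairs assms(3) by simp
qed

lemma card_star_if_card_Int_eq:
  assumes "W \<in> \<W>" "W' \<in> \<W>" "card (W \<inter> W') = m" "y \<in> W \<inter> W'"
  shows "card (star y) = Suc m"
proof (rule ccontr)
  let ?I = "W \<inter> W'"
  assume "card (star y) \<noteq> Suc m"
  then have "card (star y) \<le> m" using card_star_le[of y] by simp
  have "finite ?I" using finite_member[OF assms(1)] by simp
  then have "card (\<Union>x\<in>?I. star x) \<le> card (star y) + card (\<Union>x\<in>?I - {y}. star x)"
    using assms(4) card_Un_le[of "star y"] by (metis UN_insert insert_Diff)
  also have "\<dots> \<le> m + (m - 1) * Suc m"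
    using \<open>card (star y) \<le> m\<close> card_UN_star_le[of "?I - {y}"] \<open>finite ?I\<close> assms(3,4) by simp
  finally show False
    using card_UN_star_if_card_Int_eq[OF assms(1-3)] m_ge_3 by (cases m) auto
qed

lemma pair_notin_if_card_Int_eq:
  assumes "W \<in> \<W>" "W' \<in> \<W>" "card (W \<inter> W') = m" "y \<in> W \<inter> W'" "z \<in> W \<inter> W'" "y \<noteq> z"
  shows "{y, z} \<notin> pairs"
proof
  let ?I = "W \<inter> W'"
  assume "{y, z} \<in> pairs"
  then have "star y \<inter> star z \<noteq> {}" unfolding star_def by blast
  moreover have "finite ?I" using finite_member[OF assms(1)] by simp
  ultimately have "card (\<Union>x\<in>?I. star x) < (\<Sum>x\<in>?I. card (star x))"
    using card_UN_less_sum[of ?I star y z] finite_star assms(4-6) by blast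
  also have "\<dots> \<le> (\<Sum>x\<in>?I. Suc m)" by (rule sum_mono) (rule card_star_le)
  finally show False
    using card_UN_star_if_card_Int_eq[OF assms(1-3)] assms(3) by simp
qed

lemma exists_singleton_Int: "\<exists>W\<in>\<W>. \<exists>W'\<in>\<W>. \<exists>a. W \<inter> W' = {a}"
proof -
  obtain W where W: "W \<in> \<W>" using nonempty by blast
  then obtain x where "x \<in> W" using card_member[OF W] by fastforce
  then obtain W' where W': "W' \<in> \<W>" "x \<notin> W'" using no_common_point member_subset[OF W] by blast
  then have "W \<noteq> W'" using \<open>x \<in> W\<close> by blast
  show ?thesis
  proof (cases "card (W \<inter> W') = 1")
    case True
    then show ?thesis using W W' by (metis card_1_singletonE)
  next
    case False
    then have m: "card (W \<inter> W') = m" using card_Int_cases[OF W W'(1) \<open>W \<noteq> W'\<close>] by simp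
    then have "card (W - W') = 1"
      using card_member[OF W] finite_member[OF W] by (simp add: card_Diff_subset_Int)
    then obtain p where p: "W - W' = {p}" by (elim card_1_singletonE)
    have "W \<inter> W' \<noteq> {}" using m m_ge_3 by auto
    then obtain y where y: "y \<in> W \<inter> W'" by blast
    then obtain W'' where W'': "W'' \<in> \<W>" "y \<notin> W''" using no_common_point member_subset[OF W] by blast
    have star_y: "star y = (\<lambda>z. {y, z}) ` W''"
      using star_eq_if_card_eq[OF card_star_if_card_Int_eq[OF W W'(1) m y] W''] .
    have "W \<inter> W'' \<subseteq> {p}"
    proof
      fix z assume z: "z \<in> W \<inter> W''"
      then have "{y, z} \<in> pairs" "y \<noteq> z" using star_y W''(2) unfolding star_def by auto
      then have "z \<notin> W \<inter> W'" using pair_notin_if_card_Int_eq[OF W W'(1) m y] by blast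
      then show "z \<in> {p}" using z p by blast
    qed
    then have "W \<inter> W'' = {p}" using intersecting[OF W W''(1)] by blast
    then show ?thesis using W W''(1) by blast
  qed
qed

lemma cross_pairs_if_singleton_Int:
  assumes "W \<in> \<W>" "W' \<in> \<W>" "W \<inter> W' = {a}"
  shows "\<forall>p\<in>W - {a}. \<forall>q\<in>W' - {a}. {p, q} \<in> pairs" and "card (star a) = Suc m"
proof -
  let ?cross = "(\<lambda>(p, q). {p, q}) ` ((W - {a}) \<times> (W' - {a}))"
  have diff: "W - W' = W - {a}" "W' - W = W' - {a}" using assms(3) by auto
  have "finite ?cross" using finite_member[OF assms(1)] finite_member[OF assms(2)] by simp
  have "a \<in> W" "a \<in> W'" using assms(3) by auto
  then have "card (W - {a}) = m" "card (W' - {a}) = m"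
    using assms(1,2) card_member finite_member by simp_all
  then have cross: "card ?cross \<le> m * m"
    using card_cross_pairs_le finite_member assms(1,2) by (metis finite_Diff)
  have "pairs \<subseteq> (?cross \<inter> pairs) \<union> star a"
    using pairs_subset[OF assms(1,2)] unfolding diff assms(3) by auto
  then have "card pairs \<le> card (?cross \<inter> pairs) + card (star a)"
    using \<open>finite ?cross\<close> finite_star by (meson card_Un_le card_mono finite_Int finite_UnI order_trans)
  moreover have "card (?cross \<inter> pairs) \<le> card ?cross"
    using \<open>finite ?cross\<close> by (simp add: card_mono)
  moreover note card_star_le[of a] cross card_pairs
  ultimately have "card (?cross \<inter> pairs) = card ?cross" "card (star a) = Suc m"
    by (simp_all add: algebra_simps)
  then have "?cross \<subseteq> pairs"
    using card_subset_eq[OF \<open>finite ?cross\<close>, of "?cross \<inter> pairs"] by blast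
  then show "\<forall>p\<in>W - {a}. \<forall>q\<in>W' - {a}. {p, q} \<in> pairs" by blast
  show "card (star a) = Suc m" by fact
qed

lemma members_if_singleton_Int:
  assumes "W \<in> \<W>" "W' \<in> \<W>" "W \<inter> W' = {a}" "W'' \<in> \<W>" "a \<notin> W''" "W - {a} \<subseteq> W''"
  shows "\<exists>u\<in>W' - {a}. \<W> = {W, W', insert u (W - {a})}"
proof -
  let ?P = "W - {a}" and ?Q = "W' - {a}"
  have cover_PQ: "?P \<subseteq> V \<or> ?Q \<subseteq> V" if "V \<in> \<W>" for V
    using cross_pairs_if_singleton_Int(1)[OF assms(1-3)] pair_meets[OF _ that] by blast
  have "star a = (\<lambda>y. {a, y}) ` W''"
    using star_eq_if_card_eq[OF cross_pairs_if_singleton_Int(2)[OF assms(1-3)] assms(4,5)] .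
  then have cover_a: "a \<in> V \<or> W'' \<subseteq> V" if "V \<in> \<W>" for V
    using pair_meets[OF _ that] unfolding star_def by blast
  obtain u where "u \<in> W''" "u \<in> ?Q" using intersecting[OF assms(4,2)] assms(5) by blast
  have "u \<notin> ?P" "a \<in> W" using \<open>u \<in> ?Q\<close> assms(3) by auto
  then have "card (insert u ?P) = Suc m"
    using assms(1) card_member finite_member by simp
  then have W'': "W'' = insert u ?P"
    using member_eq_if_subset[OF assms(4)] \<open>u \<in> W''\<close> assms(6) by blast
  have "V \<in> {W, W', W''}" if "V \<in> \<W>" for V
  proof (cases "a \<in> V")
    case True
    then have "W \<subseteq> V \<or> W' \<subseteq> V" using cover_PQ[OF that] assms(3) by blast
    then show ?thesis using member_eq_if_subset[OF that] card_member assms(1,2) by blast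
  next
    case False
    then show ?thesis using cover_a[OF that] member_eq_if_subset[OF that] card_member assms(4) by blast
  qed
  then have "\<W> = {W, W', W''}" using assms(1,2,4) by blast
  then show ?thesis using W'' \<open>u \<in> ?Q\<close> by blast
qed

theorem members_structure:
  obtains a B C u where "a \<notin> B" "a \<notin> C" "B \<inter> C = {}" "u \<in> C" "card B = m" "card C = m"
    "\<W> = {insert a B, insert a C, insert u B}"
proof -
  obtain W W' a where W: "W \<in> \<W>" "W' \<in> \<W>" "W \<inter> W' = {a}"
    using exists_singleton_Int by blast
  then have "a \<in> X" using member_subset by blast
  then obtain W'' where W'': "W'' \<in> \<W>" "a \<notin> W''" using no_common_point by blast
  have "W - {a} \<subseteq> W'' \<or> W' - {a} \<subseteq> W''"
    using cross_pairs_if_singleton_Int(1)[OF W] pair_meets[OF _ W''(1)] W''(2) by blast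
  then obtain V V' where V: "V \<in> \<W>" "V' \<in> \<W>" "V \<inter> V' = {a}" "V - {a} \<subseteq> W''"
    using W by (metis Int_commute)
  then obtain u where u: "u \<in> V' - {a}" "\<W> = {V, V', insert u (V - {a})}"
    using members_if_singleton_Int[OF V(1-3) W'' V(4)] by blast
  have "V = insert a (V - {a})" "V' = insert a (V' - {a})" using V(3) by auto
  show thesis
  proof (rule that[of a "V - {a}" "V' - {a}" u])
    show "card (V - {a}) = m" "card (V' - {a}) = m"
      using V(1,2) \<open>V = insert a (V - {a})\<close> \<open>V' = insert a (V' - {a})\<close> card_member finite_member
      by (metis card_Diff_singleton diff_Suc_1 insertI1)+
    show "\<W> = {insert a (V - {a}), insert a (V' - {a}), insert u (V - {a})}"
      using u(2) \<open>V = insert a (V - {a})\<close> \<open>V' = insert a (V' - {a})\<close> by simp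
  qed (use V(3) u(1) in auto)
qed

end

section \<open>Minimum t-covers of a maximal t-intersecting family\<close>

lemma tau_t_le: "t_cover n t G S \<Longrightarrow> tau_t n t G \<le> card S"
  unfolding tau_t_def by (rule Least_le) blast

lemma tau_t_attained:
  assumes "t_cover n t G S"
  obtains S' where "t_cover n t G S'" "card S' = tau_t n t G"
  using LeastI_ex[of "\<lambda>s. \<exists>S. t_cover n t G S \<and> card S = s"] assms
  unfolding tau_t_def by blast

lemma common_subset_if_tau_t_eq:
  assumes "tau_t n t G = t" "\<And>S. S \<in> G \<Longrightarrow> S \<subseteq> {1..n} \<and> t \<le> card S"
  obtains T where "T \<subseteq> {1..n}" "card T = t" "\<And>S. S \<in> G \<Longrightarrow> T \<subseteq> S"
proof -
  have "t_cover n t G {1..n}"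
    unfolding t_cover_def using assms(2) by (simp add: Int_absorb1)
  then obtain T where T: "t_cover n t G T" "card T = t"
    using tau_t_attained assms(1) by metis
  then have "finite T" unfolding t_cover_def using finite_subset by blast
  have "T \<subseteq> S" if "S \<in> G" for S
  proof -
    have "card T \<le> card (T \<inter> S)" using T that unfolding t_cover_def by auto
    then show ?thesis using card_subset_eq[OF \<open>finite T\<close>, of "T \<inter> S"] card_mono[OF \<open>finite T\<close>, of "T \<inter> S"] by auto
  qed
  then show thesis using that T unfolding t_cover_def by blast
qed

lemma le_card_Int_iff:
  assumes "finite S" "T \<subseteq> S" "finite G" "card (T \<inter> G) = t - 1" "1 \<le> t"
  shows "t \<le> card (S \<inter> G) \<longleftrightarrow> (S - T) \<inter> G \<noteq> {}"
proof
  assume "t \<le> card (S \<inter> G)"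
  show "(S - T) \<inter> G \<noteq> {}"
  proof
    assume "(S - T) \<inter> G = {}"
    then have "S \<inter> G \<subseteq> T \<inter> G" by blast
    then have "card (S \<inter> G) \<le> card (T \<inter> G)" using assms(3) by (simp add: card_mono)
    then show False using \<open>t \<le> card (S \<inter> G)\<close> assms(4,5) by linarith
  qed
next
  assume "(S - T) \<inter> G \<noteq> {}"
  then obtain x where x: "x \<in> S" "x \<notin> T" "x \<in> G" by blast
  then have "insert x (T \<inter> G) \<subseteq> S \<inter> G" using assms(2) by blast
  then have "card (insert x (T \<inter> G)) \<le> card (S \<inter> G)" using assms(1) by (simp add: card_mono)
  then show "t \<le> card (S \<inter> G)" using x assms(3-5) by simp
qed

lemma maximal_t_intersecting_memI:
  assumes "maximal_t_intersecting n k t F" "Y \<in> k_sets n k" "t \<le> k"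
    and "\<And>H. H \<in> F \<Longrightarrow> t \<le> card (Y \<inter> H)"
  shows "Y \<in> F"
proof (rule ccontr)
  assume "Y \<notin> F"
  have "t_intersecting t (insert Y F)"
    using assms unfolding maximal_t_intersecting_def t_intersecting_def k_sets_def
    by (auto simp: Int_commute)
  moreover have "F \<subset> insert Y F" "insert Y F \<subseteq> k_sets n k"
    using \<open>Y \<notin> F\<close> assms(1,2) unfolding maximal_t_intersecting_def by auto
  ultimately show False using assms(1) unfolding maximal_t_intersecting_def by blast
qed

locale kernel_setting =
  fixes n k t m :: nat and F :: "nat set set" and T :: "nat set"
  assumes maximal: "maximal_t_intersecting n k t F"
    and k_eq: "k = t + m" and m_ge_3: "3 \<le> m"
    and tau_F: "tau_t n t F = t + 2"
    and card_T_t: "card (T_t n t F) = m * (m + 1) + 1"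
    and T_subset: "T \<subseteq> {1..n}" and card_T: "card T = t"
    and T_subset_covers: "S \<in> T_t n t F \<Longrightarrow> T \<subseteq> S"
begin

definition deficient :: "nat set set" where
  "deficient = {G \<in> F. \<not> T \<subseteq> G}"

definition traces :: "nat set set" where
  "traces = (\<lambda>G. G - T) ` deficient"

lemma finite_T: "finite T"
  using T_subset finite_subset by blast

lemma member_F: "G \<in> F \<Longrightarrow> G \<subseteq> {1..n} \<and> card G = k \<and> finite G"
  using maximal finite_subset[of G "{1..n}"] unfolding maximal_t_intersecting_def k_sets_def by auto

lemma finite_F: "finite F"
proof -
  have "F \<subseteq> Pow {1..n}" using member_F by blast
  then show ?thesis using finite_subset by blast
qed

lemma card_Int_F: "G \<in> F \<Longrightarrow> H \<in> F \<Longrightarrow> t \<le> card (G \<inter> H)"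
  using maximal unfolding maximal_t_intersecting_def t_intersecting_def by blast

lemma member_T_t: "S \<in> T_t n t F \<Longrightarrow> t_cover n t F S \<and> card S = t + 2 \<and> finite S"
  using tau_F finite_subset unfolding T_t_def t_cover_def by auto

lemma t_pos: "1 \<le> t"
proof (rule ccontr)
  assume "\<not> 1 \<le> t"
  then have "t_cover n t F {}" unfolding t_cover_def by simp
  then show False using tau_t_le[of n t F "{}"] tau_F by simp
qed

lemma card_Diff_T: "S \<in> T_t n t F \<Longrightarrow> card (S - T) = 2"
  using member_T_t T_subset_covers card_T finite_T by (simp add: card_Diff_subset)

lemma inj_on_Diff_T: "inj_on (\<lambda>S. S - T) (T_t n t F)"
  by (rule inj_onI) (use T_subset_covers in blast)

lemma T_t_nonempty: "T_t n t F \<noteq> {}"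
  using card_T_t by auto

lemma card_Int_T_ge: "G \<in> F \<Longrightarrow> t \<le> card (G \<inter> T) + 2"
proof -
  assume "G \<in> F"
  obtain S where S: "S \<in> T_t n t F" using T_t_nonempty by blast
  have "S \<inter> G \<subseteq> (G \<inter> T) \<union> (S - T)" by blast
  then have "card (S \<inter> G) \<le> card (G \<inter> T) + card (S - T)"
    by (metis card_Un_le card_mono finite_Diff finite_Int finite_UnI finite_T member_T_t[OF S] order_trans)
  moreover have "t \<le> card (S \<inter> G)" using member_T_t[OF S] \<open>G \<in> F\<close> unfolding t_cover_def by blast
  ultimately show ?thesis using card_Diff_T[OF S] by linarith
qed

lemma covers_Diff_T_subset:
  assumes "G \<in> F" "card (G \<inter> T) + 2 = t" "S \<in> T_t n t F"
  shows "S - T \<subseteq> G"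
proof
  fix x assume x: "x \<in> S - T"
  show "x \<in> G"
  proof (rule ccontr)
    assume "x \<notin> G"
    then have "S \<inter> G \<subseteq> (G \<inter> T) \<union> (S - T - {x})" by blast
    moreover have "finite (S - T - {x})" using member_T_t[OF assms(3)] by simp
    ultimately have "card (S \<inter> G) \<le> card (G \<inter> T) + card (S - T - {x})"
      by (metis card_Un_le card_mono finite_Int finite_UnI finite_T order_trans)
    moreover have "card (S - T - {x}) = 1" using card_Diff_T[OF assms(3)] x member_T_t[OF assms(3)] by simp
    moreover have "t \<le> card (S \<inter> G)" using member_T_t[OF assms(3)] assms(1) unfolding t_cover_def by blast
    ultimately show False using assms(2) by linarith
  qed
qed

lemma card_Int_T_deficient: "G \<in> deficient \<Longrightarrow> card (G \<inter> T) = t - 1"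
proof -
  assume "G \<in> deficient"
  then have G: "G \<in> F" "\<not> T \<subseteq> G" unfolding deficient_def by auto
  then have "card (G \<inter> T) < t"
    using psubset_card_mono[OF finite_T, of "G \<inter> T"] card_T by blast
  moreover have "card (G \<inter> T) + 2 \<noteq> t"
  proof
    assume tight: "card (G \<inter> T) + 2 = t"
    let ?D = "G - T"
    have "finite ?D" using member_F[OF G(1)] by simp
    have "card ?D = m + 2"
      using card_Diff_subset_Int[of G T] member_F[OF G(1)] tight k_eq by simp
    have "(\<lambda>S. S - T) ` T_t n t F \<subseteq> {e. e \<subseteq> ?D \<and> card e = 2}"
      using covers_Diff_T_subset[OF G(1) tight] card_Diff_T by blast
    then have "card ((\<lambda>S. S - T) ` T_t n t F) \<le> (m + 2) choose 2"
      using card_mono[of "{e. e \<subseteq> ?D \<and> card e = 2}"] n_subsets[OF \<open>finite ?D\<close>, of 2]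
        \<open>finite ?D\<close> \<open>card ?D = m + 2\<close> by simp
    then have "m * (m + 1) + 1 \<le> (m + 2) choose 2"
      using card_image[OF inj_on_Diff_T] card_T_t by simp
    moreover have "(m + 2) choose 2 < m * (m + 1) + 1"
    proof -
      have "(m + 2) * (m + 1) < (m * (m + 1) + 1) * 2" using m_ge_3 by (simp add: algebra_simps)
      moreover have "(m + 2) choose 2 = (m + 2) * (m + 1) div 2" by (simp add: choose_two)
      ultimately show ?thesis using less_mult_imp_div_less by presburger
    qed
    ultimately show False by simp
  qed
  ultimately show ?thesis using card_Int_T_ge[OF G(1)] by linarith
qed

lemma card_T_Diff_deficient: "G \<in> deficient \<Longrightarrow> card (T - G) = 1"
  using card_Int_T_deficient[of G] card_Diff_subset_Int[of T G] finite_T card_T t_pos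
  by (simp add: Int_commute)

lemma card_trace: "G \<in> deficient \<Longrightarrow> card (G - T) = Suc m"
  using card_Int_T_deficient[of G] card_Diff_subset_Int[of G T] member_F k_eq t_pos
  unfolding deficient_def by simp

lemma le_card_Int_iff_meets_traces:
  assumes "T \<subseteq> Y" "finite Y"
  shows "(\<forall>G\<in>F. t \<le> card (Y \<inter> G)) \<longleftrightarrow> (\<forall>W\<in>traces. (Y - T) \<inter> W \<noteq> {})"
proof -
  have deficient_iff: "t \<le> card (Y \<inter> G) \<longleftrightarrow> (Y - T) \<inter> (G - T) \<noteq> {}" if "G \<in> deficient" for G
    using le_card_Int_iff[OF assms(2,1), of G t] that card_Int_T_deficient[OF that] member_F t_pos
    unfolding deficient_def by (auto simp: Int_commute)
  have containing: "t \<le> card (Y \<inter> G)" if "T \<subseteq> G" for G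
  proof -
    have "T \<subseteq> Y \<inter> G" using that assms(1) by blast
    then show ?thesis using assms(2) card_mono[of "Y \<inter> G" T] card_T by simp
  qed
  show ?thesis
  proof
    assume "\<forall>G\<in>F. t \<le> card (Y \<inter> G)"
    then show "\<forall>W\<in>traces. (Y - T) \<inter> W \<noteq> {}"
      using deficient_iff unfolding traces_def deficient_def by blast
  next
    assume meets: "\<forall>W\<in>traces. (Y - T) \<inter> W \<noteq> {}"
    show "\<forall>G\<in>F. t \<le> card (Y \<inter> G)"
    proof
      fix G assume "G \<in> F"
      show "t \<le> card (Y \<inter> G)"
      proof (cases "T \<subseteq> G")
        case False
        then have "G \<in> deficient" using \<open>G \<in> F\<close> unfolding deficient_def by blast
        then show ?thesis using deficient_iff meets unfolding traces_def by blast
      qed (rule containing)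
    qed
  qed
qed

lemma traces_intersecting: "W \<in> traces \<Longrightarrow> W' \<in> traces \<Longrightarrow> W \<inter> W' \<noteq> {}"
proof -
  assume "W \<in> traces" "W' \<in> traces"
  then obtain G G' where G: "G \<in> deficient" "G' \<in> deficient" "W = G - T" "W' = G' - T"
    unfolding traces_def by blast
  have "t \<le> card (G \<inter> G')" using G(1,2) card_Int_F unfolding deficient_def by blast
  show "W \<inter> W' \<noteq> {}"
  proof
    assume "W \<inter> W' = {}"
    then have "G \<inter> G' \<subseteq> G \<inter> T" using G(3,4) by blast
    then have "card (G \<inter> G') \<le> card (G \<inter> T)" using finite_T by (simp add: card_mono)
    then show False using \<open>t \<le> card (G \<inter> G')\<close> card_Int_T_deficient[OF G(1)] t_pos by linarith
  qed
qed

lemma traces_no_common_point: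
  assumes "x \<in> {1..n} - T"
  shows "\<exists>W\<in>traces. x \<notin> W"
proof -
  have "card (insert x T) = t + 1" using assms finite_T card_T by simp
  then have "\<not> t_cover n t F (insert x T)" using tau_t_le[of n t F] tau_F by fastforce
  then obtain G where G: "G \<in> F" "card (insert x T \<inter> G) < t"
    using assms T_subset unfolding t_cover_def by force
  have "\<not> T \<subseteq> G"
  proof
    assume "T \<subseteq> G"
    then have "card T \<le> card (insert x T \<inter> G)" using member_F[OF G(1)] by (intro card_mono) auto
    then show False using G(2) card_T by simp
  qed
  then have "G \<in> deficient" unfolding deficient_def using G(1) by blast
  have "x \<notin> G"
  proof
    assume "x \<in> G"
    then have "insert x T \<inter> G = insert x (G \<inter> T)" by blast
    then have "card (insert x T \<inter> G) = Suc (t - 1)"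
      using assms finite_T card_Int_T_deficient[OF \<open>G \<in> deficient\<close>] by simp
    then show False using G(2) t_pos by simp
  qed
  then show ?thesis using \<open>G \<in> deficient\<close> unfolding traces_def by blast
qed

lemma deficient_nonempty: "deficient \<noteq> {}"
proof
  assume "deficient = {}"
  then have "t_cover n t F T"
    using T_subset card_T unfolding deficient_def t_cover_def by (auto simp: Int_absorb2)
  then show False using tau_t_le[of n t F T] tau_F card_T by simp
qed

lemma covers_eq_transversal_pairs: "(\<lambda>S. S - T) ` T_t n t F = transversal_pairs ({1..n} - T) traces"
proof (intro equalityI subsetI)
  fix e assume "e \<in> (\<lambda>S. S - T) ` T_t n t F"
  then obtain S where S: "S \<in> T_t n t F" "e = S - T" by blast
  then have "\<forall>W\<in>traces. e \<inter> W \<noteq> {}"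
    using le_card_Int_iff_meets_traces[OF T_subset_covers[OF S(1)]] member_T_t[OF S(1)]
    unfolding t_cover_def by auto
  moreover have "e \<subseteq> {1..n} - T" using S member_T_t unfolding t_cover_def by auto
  ultimately show "e \<in> transversal_pairs ({1..n} - T) traces"
    using card_Diff_T[OF S(1)] S(2) unfolding transversal_pairs_def by blast
next
  fix e assume "e \<in> transversal_pairs ({1..n} - T) traces"
  then have e: "e \<subseteq> {1..n} - T" "card e = 2" "\<forall>W\<in>traces. e \<inter> W \<noteq> {}"
    unfolding transversal_pairs_def by auto
  have "finite e" using e(1) finite_subset by blast
  have "T \<union> e - T = e" using e(1) by blast
  have "card (T \<union> e) = t + 2"
    using e card_T finite_T \<open>finite e\<close> by (subst card_Un_disjoint) auto
  moreover have "t_cover n t F (T \<union> e)"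
    using le_card_Int_iff_meets_traces[of "T \<union> e"] e T_subset finite_T \<open>finite e\<close>
    unfolding t_cover_def \<open>T \<union> e - T = e\<close> by auto
  ultimately have "T \<union> e \<in> T_t n t F" unfolding T_t_def using tau_F by simp
  then show "e \<in> (\<lambda>S. S - T) ` T_t n t F" using \<open>T \<union> e - T = e\<close> by (metis image_eqI)
qed

sublocale extremal_intersecting_uniform "{1..n} - T" traces m
proof
  show "finite ({1..n} - T)" by simp
  show "W \<subseteq> {1..n} - T" if "W \<in> traces" for W
    using that member_F unfolding traces_def deficient_def by blast
  show "card W = Suc m" if "W \<in> traces" for W
    using that card_trace unfolding traces_def by blast
  show "traces \<noteq> {}" using deficient_nonempty unfolding traces_def by blast
  show "card (transversal_pairs ({1..n} - T) traces) = m * (m + 1) + 1"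
    using card_image[OF inj_on_Diff_T] card_T_t covers_eq_transversal_pairs by simp
qed (use traces_intersecting traces_no_common_point m_ge_3 in auto)

(* Members missing different points of T share only t - 2 points inside T. *)
lemma missing_point_eq:
  assumes "G \<in> deficient" "H \<in> deficient" "card ((G - T) \<inter> (H - T)) \<le> 1"
  shows "T - G = T - H"
proof (rule ccontr)
  assume "T - G \<noteq> T - H"
  moreover obtain z z' where "T - G = {z}" "T - H = {z'}"
    using card_T_Diff_deficient[OF assms(1)] card_T_Diff_deficient[OF assms(2)] by (metis card_1_singletonE)
  ultimately have z: "z \<noteq> z'" "{z, z'} \<subseteq> T" by auto
  have "G \<inter> H \<subseteq> (T - {z, z'}) \<union> ((G - T) \<inter> (H - T))"
    using \<open>T - G = {z}\<close> \<open>T - H = {z'}\<close> by blast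
  then have "card (G \<inter> H) \<le> card (T - {z, z'}) + card ((G - T) \<inter> (H - T))"
    using member_F assms(1) finite_T unfolding deficient_def
    by (metis (no_types, lifting) card_Un_le card_mono finite_Diff finite_Int finite_UnI mem_Collect_eq order_trans)
  also have "card (T - {z, z'}) = t - 2"
    using z finite_T card_T by (simp add: card_Diff_subset)
  finally have "card (G \<inter> H) \<le> t - 2 + 1" using assms(3) by linarith
  moreover have "t \<le> card (G \<inter> H)" using assms(1,2) card_Int_F unfolding deficient_def by blast
  moreover have "2 \<le> t" using z card_mono[OF finite_T z(2)] card_T by simp
  ultimately show False by linarith
qed

lemma mem_F_if_meets_traces:
  assumes "Y \<in> k_sets n k" "T \<subseteq> Y" "\<forall>W\<in>traces. (Y - T) \<inter> W \<noteq> {}"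
  shows "Y \<in> F"
proof -
  have "finite Y" using assms(1) finite_subset unfolding k_sets_def by blast
  then have "\<forall>H\<in>F. t \<le> card (Y \<inter> H)" using le_card_Int_iff_meets_traces assms(2,3) by blast
  then show ?thesis by (intro maximal_t_intersecting_memI[OF maximal]) (use assms(1) k_eq in auto)
qed

lemma F_eq: "F = {Y \<in> k_sets n k. T \<subseteq> Y \<and> (\<forall>W\<in>traces. (Y - T) \<inter> W \<noteq> {})} \<union> deficient"
proof (intro equalityI subsetI)
  fix G assume "G \<in> F"
  then have "T \<subseteq> G \<Longrightarrow> \<forall>W\<in>traces. (G - T) \<inter> W \<noteq> {}"
    using le_card_Int_iff_meets_traces card_Int_F member_F by blast
  then show "G \<in> {Y \<in> k_sets n k. T \<subseteq> Y \<and> (\<forall>W\<in>traces. (Y - T) \<inter> W \<noteq> {})} \<union> deficient"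
    using \<open>G \<in> F\<close> maximal unfolding deficient_def maximal_t_intersecting_def by blast
next
  fix Y assume "Y \<in> {Y \<in> k_sets n k. T \<subseteq> Y \<and> (\<forall>W\<in>traces. (Y - T) \<inter> W \<noteq> {})} \<union> deficient"
  then show "Y \<in> F"
  proof
    assume "Y \<in> {Y \<in> k_sets n k. T \<subseteq> Y \<and> (\<forall>W\<in>traces. (Y - T) \<inter> W \<noteq> {})}"
    then show "Y \<in> F" by (intro mem_F_if_meets_traces) auto
  qed (simp add: deficient_def)
qed

context
  fixes a u :: nat and B C :: "nat set"
  assumes triangle: "a \<notin> B" "a \<notin> C" "B \<inter> C = {}" "u \<in> C" "card B = m" "card C = m"
    and traces_eq: "traces = {insert a B, insert a C, insert u B}"
begin

lemma triangle_outside_T: "a \<in> {1..n} - T" "B \<subseteq> {1..n} - T" "C \<subseteq> {1..n} - T"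
proof -
  have "insert a B \<in> traces" "insert a C \<in> traces" unfolding traces_eq by simp_all
  then show "a \<in> {1..n} - T" "B \<subseteq> {1..n} - T" "C \<subseteq> {1..n} - T"
    using member_subset by blast+
qed

lemma common_missing_point:
  obtains z where "z \<in> T" "deficient = (\<lambda>W. (T - {z}) \<union> W) ` traces"
proof -
  obtain G1 G2 where G: "G1 \<in> deficient" "G2 \<in> deficient" "G1 - T = insert a B" "G2 - T = insert a C"
    using traces_eq unfolding traces_def by (metis (no_types, lifting) imageE insertCI)
  have W12: "insert a B \<inter> insert a C = {a}" "insert a C \<inter> insert a B = {a}"
    and W32: "insert u B \<inter> insert a C = {u}" using triangle by auto
  have "T - G = T - G2" if "G \<in> deficient" for G
  proof -
    have "G - T \<in> traces" using that unfolding traces_def by (rule imageI)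
    then consider "G - T = insert a B" | "G - T = insert a C" | "G - T = insert u B"
      unfolding traces_eq by fast
    then show ?thesis
    proof cases
      case 1
      then show ?thesis using missing_point_eq[OF that G(2)] unfolding 1 G(4) W12 by simp
    next
      case 2
      have "T - G = T - G1" using missing_point_eq[OF that G(1)] unfolding 2 G(3) W12 by simp
      also have "\<dots> = T - G2" using missing_point_eq[OF G(1,2)] unfolding G(3,4) W12 by simp
      finally show ?thesis .
    next
      case 3
      then show ?thesis using missing_point_eq[OF that G(2)] unfolding 3 G(4) W32 by simp
    qed
  qed
  moreover obtain z where "T - G2 = {z}"
    using card_T_Diff_deficient[OF G(2)] by (metis card_1_singletonE)
  ultimately have "G = (T - {z}) \<union> (G - T)" if "G \<in> deficient" for G
    using that by blast
  then have "deficient = (\<lambda>W. (T - {z}) \<union> W) ` traces"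
    unfolding traces_def by force
  moreover have "z \<in> T" using \<open>T - G2 = {z}\<close> by blast
  ultimately show thesis using that by blast
qed

lemma containing_T_eq:
  "{Y \<in> k_sets n k. T \<subseteq> Y \<and> (\<forall>W\<in>traces. (Y - T) \<inter> W \<noteq> {})}
    = {Y \<in> k_sets n k. Y \<inter> insert a T = T \<and> Y \<inter> B \<noteq> {} \<and> Y \<inter> C \<noteq> {}}
      \<union> {Y \<in> k_sets n k. insert a T \<subseteq> Y \<and> Y \<inter> (B \<union> {u}) \<noteq> {}}"
proof -
  have disj: "a \<notin> T" "B \<inter> T = {}" "C \<inter> T = {}" "u \<notin> T"
    using triangle_outside_T triangle(4) by auto
  have pointwise: "T \<subseteq> Y \<and> (\<forall>W\<in>traces. (Y - T) \<inter> W \<noteq> {}) \<longleftrightarrow>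
      (Y \<inter> insert a T = T \<and> Y \<inter> B \<noteq> {} \<and> Y \<inter> C \<noteq> {}) \<or> (insert a T \<subseteq> Y \<and> Y \<inter> (B \<union> {u}) \<noteq> {})"
    for Y
    by (cases "a \<in> Y") (use disj in \<open>auto simp: traces_eq\<close>)
  have split: "{Y \<in> K. P Y} = {Y \<in> K. Q Y} \<union> {Y \<in> K. R Y}"
    if "\<And>Y. P Y \<longleftrightarrow> Q Y \<or> R Y" for K :: "nat set set" and P Q R
    using that by blast
  show ?thesis by (rule split) (rule pointwise)
qed

lemma type_I_if_triangle: "type_I n k t F"
proof -
  obtain z where z: "z \<in> T" "deficient = (\<lambda>W. (T - {z}) \<union> W) ` traces"
    by (rule common_missing_point)
  note outside = triangle_outside_T
  define A where "A = insert a (T - {z})"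
  have TA: "T \<inter> A = T - {z}" and AT: "A \<union> T = insert a T"
    using outside(1) z(1) unfolding A_def by auto
  have "card (T - {z}) = t - 1" using z(1) finite_T card_T by simp
  moreover have "a \<notin> T - {z}" using outside(1) by blast
  ultimately have "card A = t" using finite_T t_pos unfolding A_def by simp
  have "deficient = {A \<union> B, A \<union> C, (T \<inter> A) \<union> B \<union> {u}}"
    unfolding z(2) traces_eq TA unfolding A_def using outside(1) by auto
  then have "F = {Y \<in> k_sets n k. Y \<inter> (A \<union> T) = T \<and> Y \<inter> B \<noteq> {} \<and> Y \<inter> C \<noteq> {}}
      \<union> {Y \<in> k_sets n k. A \<union> T \<subseteq> Y \<and> Y \<inter> (B \<union> {u}) \<noteq> {}}
      \<union> {A \<union> B, A \<union> C, (T \<inter> A) \<union> B \<union> {u}}"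
    using F_eq containing_T_eq unfolding AT by simp
  moreover have "T \<in> k_sets n t" "A \<in> k_sets n t" "B \<in> k_sets n (k - t)" "C \<in> k_sets n (k - t)"
    using T_subset card_T \<open>card A = t\<close> outside z(1) triangle(5,6) k_eq unfolding k_sets_def A_def by auto
  moreover have "card (T \<inter> A) = t - 1" using TA z(1) finite_T card_T by simp
  moreover have "T \<inter> (B \<union> C) = {}" "A \<inter> B = {}" "A \<inter> C = {}"
    using outside triangle(1,2) unfolding A_def by auto
  ultimately show ?thesis
    unfolding type_I_def using triangle(3,4) by blast
qed

lemma Un_T_mem_F:
  assumes "Y \<subseteq> {1..n} - T - {a}" "card Y = m" "Y \<inter> B \<noteq> {}" "Y \<inter> C \<noteq> {}"
  shows "T \<union> Y \<in> F"
proof (rule mem_F_if_meets_traces)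
  have "T \<inter> Y = {}" "finite Y" using assms(1) finite_subset[of Y "{1..n}"] by auto
  then have "card (T \<union> Y) = k" using finite_T card_T k_eq assms(2) by (simp add: card_Un_disjoint)
  then show "T \<union> Y \<in> k_sets n k" using assms(1) T_subset unfolding k_sets_def by auto
  show "\<forall>W\<in>traces. (T \<union> Y - T) \<inter> W \<noteq> {}"
    using \<open>T \<inter> Y = {}\<close> assms(3,4) unfolding traces_eq by auto
qed simp

lemma insert_Un_T_mem_F:
  assumes "Y \<subseteq> {1..n} - T - {a}" "card Y = m - 1" "Y \<inter> insert u B \<noteq> {}"
  shows "insert a (T \<union> Y) \<in> F"
proof (rule mem_F_if_meets_traces)
  have "T \<inter> Y = {}" "a \<notin> T \<union> Y" "finite Y"
    using assms(1) triangle_outside_T(1) finite_subset[of Y "{1..n}"] by auto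
  then have "card (insert a (T \<union> Y)) = k"
    using finite_T card_T k_eq m_ge_3 assms(2) by (simp add: card_Un_disjoint)
  then show "insert a (T \<union> Y) \<in> k_sets n k"
    using assms(1) T_subset triangle_outside_T(1) unfolding k_sets_def by auto
  show "\<forall>W\<in>traces. (insert a (T \<union> Y) - T) \<inter> W \<noteq> {}"
    using \<open>T \<inter> Y = {}\<close> \<open>a \<notin> T \<union> Y\<close> assms(3) unfolding traces_eq by auto
qed auto

lemma card_families_le_card_containing_T:
  "card {Y. Y \<subseteq> {1..n} - T - {a} \<and> card Y = m \<and> Y \<inter> B \<noteq> {} \<and> Y \<inter> C \<noteq> {}}
     + card {Y. Y \<subseteq> {1..n} - T - {a} \<and> card Y = m - 1 \<and> Y \<inter> insert u B \<noteq> {}}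
   \<le> card {G \<in> F. T \<subseteq> G}"
  (is "card ?Fa + card ?Fb \<le> _")
proof -
  have sub_a: "(\<lambda>Y. T \<union> Y) ` ?Fa \<subseteq> {G \<in> F. T \<subseteq> G}"
    using Un_T_mem_F by auto
  have sub_b: "(\<lambda>Y. insert a (T \<union> Y)) ` ?Fb \<subseteq> {G \<in> F. T \<subseteq> G}"
    using insert_Un_T_mem_F by auto
  have "inj_on (\<lambda>Y. T \<union> Y) ?Fa"
    by (rule inj_onI) auto
  moreover have "inj_on (\<lambda>Y. insert a (T \<union> Y)) ?Fb"
    by (rule inj_onI) auto
  moreover have "(\<lambda>Y. T \<union> Y) ` ?Fa \<inter> (\<lambda>Y. insert a (T \<union> Y)) ` ?Fb = {}"
    using triangle_outside_T(1) by auto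
  moreover have "finite ((\<lambda>Y. T \<union> Y) ` ?Fa)" "finite ((\<lambda>Y. insert a (T \<union> Y)) ` ?Fb)"
    using finite_subset[OF sub_a] finite_subset[OF sub_b] finite_F by simp_all
  ultimately have "card ?Fa + card ?Fb = card ((\<lambda>Y. T \<union> Y) ` ?Fa \<union> (\<lambda>Y. insert a (T \<union> Y)) ` ?Fb)"
    by (simp add: card_Un_disjoint card_image)
  also have "\<dots> \<le> card {G \<in> F. T \<subseteq> G}"
    using sub_a sub_b finite_F by (intro card_mono) auto
  finally show ?thesis .
qed

lemma card_containing_T_ge_if_triangle:
  "int (m * (m + 1) + 1) * int ((n - t - 2) choose (m - 2))
     - int m * int (2 * m ^ 2 + 1) * int ((n - t - 3) choose (m - 3))
   \<le> int (card {G \<in> F. T \<subseteq> G})"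
proof -
  define V where "V = {1..n} - T - {a}"
  have V: "finite V" "B \<subseteq> V" "C \<subseteq> V" "card V = n - t - 1"
    using triangle_outside_T triangle(1,2) T_subset card_T finite_T unfolding V_def
    by (auto simp: card_Diff_subset)
  moreover have "n - t - 1 - 1 = n - t - 2" "n - t - 1 - 2 = n - t - 3" by auto
  ultimately show ?thesis
    using card_meeting_families_ge[OF V(1-3) triangle(3,5,6,4) m_ge_3]
      card_families_le_card_containing_T unfolding V_def by simp
qed

end

theorem type_I: "type_I n k t F"
proof -
  obtain a u B C where "a \<notin> B" "a \<notin> C" "B \<inter> C = {}" "u \<in> C" "card B = m" "card C = m"
    "traces = {insert a B, insert a C, insert u B}"
    by (rule members_structure)
  then show ?thesis by (rule type_I_if_triangle)
qed

theorem card_F_gt: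
  "int (m * (m + 1) + 1) * int ((n - t - 2) choose (m - 2))
     - int m * int (2 * m ^ 2 + 1) * int ((n - t - 3) choose (m - 3))
   < int (card F)"
proof -
  have "card F = card {G \<in> F. T \<subseteq> G} + card deficient"
    using finite_F unfolding deficient_def
    by (subst card_Un_disjoint[symmetric]) (auto intro: arg_cong[where f = card])
  moreover have "0 < card deficient"
    using deficient_nonempty finite_F unfolding deficient_def by (simp add: card_gt_0_iff)
  moreover obtain a u B C where "a \<notin> B" "a \<notin> C" "B \<inter> C = {}" "u \<in> C" "card B = m" "card C = m"
    "traces = {insert a B, insert a C, insert u B}"
    by (rule members_structure)
  then have "int (m * (m + 1) + 1) * int ((n - t - 2) choose (m - 2))
      - int m * int (2 * m ^ 2 + 1) * int ((n - t - 3) choose (m - 3))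
    \<le> int (card {G \<in> F. T \<subseteq> G})"
    by (rule card_containing_T_ge_if_triangle)
  ultimately show ?thesis by linarith
qed

end

theorem lemma2p3:
  fixes n k t :: nat and F :: "nat set set"
  assumes "n > 2 * k" and "k \<ge> t + 3"
    and "maximal_t_intersecting n k t F"
    and "tau_t n t F = t + 2"
    and "tau_t n t (T_t n t F) = t"
    and "card (T_t n t F) = (k - t) * (k - t + 1) + 1"
  shows "type_I n k t F \<and>
    int (card F) > int ((k - t) * (k - t + 1) + 1) * int ((n - t - 2) choose (k - t - 2))
                   - int (k - t) * int (2 * (k - t)^2 + 1) * int ((n - t - 3) choose (k - t - 3))"
proof -
  obtain T where T: "T \<subseteq> {1..n}" "card T = t" "\<And>S. S \<in> T_t n t F \<Longrightarrow> T \<subseteq> S"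
    by (rule common_subset_if_tau_t_eq[OF assms(5)]) (use assms(4) in \<open>auto simp: T_t_def t_cover_def\<close>)
  interpret kernel_setting n k t "k - t" F T
    by unfold_locales (use assms(2-4,6) T in auto)
  show ?thesis using type_I card_F_gt by simp
qed

end
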